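(* Let $(u,v)$ be a $C^3$ solution of system (W) on an open set $U\subseteq\mathbb{R}^2$. If $u_y\neq0$ on $U$, then $\partial_x\beta_1=0$ and $\partial_x\beta_3=0$ on $U$ (so $\beta_1,\partial_y\beta_1,\beta_3$ are functions of $y$ alone). If $v_x\neq0$ on $U$, then $\partial_y\alpha_1=0$ and $\partial_y\alpha_3=0$ on $U$ (so $\alpha_1,\partial_x\alpha_1,\alpha_3$ are functions of $x$ alone).
   Context: System (W): $u_{xy}+\frac{u_xu_y}{2(1+e^{(u+v)/2})}=0$, $v_{xy}+\frac{v_xv_y}{2(1+e^{(u+v)/2})}=0$. Define \[ \beta_1=\frac{u_yv_y}{1+e^{-(u+v)/2}},\quad \beta_3=\frac{2u_{yy}+u_y^2-\beta_1}{u_y},\quad \alpha_1=\frac{u_xv_x}{1+e^{-(u+v)/2}},\quad \alpha_3=\frac{2v_{xx}+v_x^2-\alpha_1}{v_x}. \] *)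

theory Defs
  imports "HOL-Analysis.Analysis"
begin

definition Dx :: "(real \<times> real \<Rightarrow> real) \<Rightarrow> real \<times> real \<Rightarrow> real" where
  "Dx f = (\<lambda>(x, y). deriv (\<lambda>s. f (s, y)) x)"

definition Dy :: "(real \<times> real \<Rightarrow> real) \<Rightarrow> real \<times> real \<Rightarrow> real" where
  "Dy f = (\<lambda>(x, y). deriv (\<lambda>t. f (x, t)) y)"

fun Ck_on :: "nat \<Rightarrow> (real \<times> real \<Rightarrow> real) \<Rightarrow> (real \<times> real) set \<Rightarrow> bool" where
  "Ck_on 0 f U = continuous_on U f"
| "Ck_on (Suc k) f U =
     (continuous_on U f \<and>
      (\<forall>(x, y) \<in> U. (\<lambda>s. f (s, y)) differentiable (at x)) \<and>
      (\<forall>(x, y) \<in> U. (\<lambda>t. f (x, t)) differentiable (at y)) \<and>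
      Ck_on k (Dx f) U \<and> Ck_on k (Dy f) U)"

definition beta1 :: "(real \<times> real \<Rightarrow> real) \<Rightarrow> (real \<times> real \<Rightarrow> real) \<Rightarrow> real \<times> real \<Rightarrow> real" where
  "beta1 u v = (\<lambda>p. Dy u p * Dy v p / (1 + exp (- (u p + v p) / 2)))"

definition beta3 :: "(real \<times> real \<Rightarrow> real) \<Rightarrow> (real \<times> real \<Rightarrow> real) \<Rightarrow> real \<times> real \<Rightarrow> real" where
  "beta3 u v = (\<lambda>p. (2 * Dy (Dy u) p + (Dy u p)^2 - beta1 u v p) / Dy u p)"

definition alpha1 :: "(real \<times> real \<Rightarrow> real) \<Rightarrow> (real \<times> real \<Rightarrow> real) \<Rightarrow> real \<times> real \<Rightarrow> real" where
  "alpha1 u v = (\<lambda>p. Dx u p * Dx v p / (1 + exp (- (u p + v p) / 2)))"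

definition alpha3 :: "(real \<times> real \<Rightarrow> real) \<Rightarrow> (real \<times> real \<Rightarrow> real) \<Rightarrow> real \<times> real \<Rightarrow> real" where
  "alpha3 u v = (\<lambda>p. (2 * Dx (Dx v) p + (Dx v p)^2 - alpha1 u v p) / Dx v p)"

definition solves_W :: "(real \<times> real \<Rightarrow> real) \<Rightarrow> (real \<times> real \<Rightarrow> real) \<Rightarrow> (real \<times> real) set \<Rightarrow> bool" where
  "solves_W u v U =
     (\<forall>p \<in> U.
        Dy (Dx u) p + Dx u p * Dy u p / (2 * (1 + exp ((u p + v p) / 2))) = 0 \<and>
        Dy (Dx v) p + Dx v p * Dy v p / (2 * (1 + exp ((u p + v p) / 2))) = 0)"

end

theory Submission
  imports Defs
begin

text \<open>With the logistic function \<open>\<sigma>(z) = 1 / (1 + e\<^sup>-\<^sup>z)\<close>, which satisfies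
  \<open>\<sigma>' = \<sigma> (1 - \<sigma>)\<close>, we have \<open>\<beta>\<^sub>1 = u\<^sub>y v\<^sub>y \<sigma>(w)\<close> for \<open>w = (u + v)/2\<close>, and (W) reads
  \<open>u\<^sub>x\<^sub>y = - u\<^sub>x u\<^sub>y (1 - \<sigma>(w)) / 2\<close>, likewise for \<open>v\<close>. Differentiating \<open>\<beta>\<^sub>1\<close> in \<open>x\<close> and
  using the symmetry of second derivatives, the three terms cancel. For \<open>\<beta>\<^sub>3\<close> one further needs
  \<open>u\<^sub>y\<^sub>y\<^sub>x = (u\<^sub>x\<^sub>y)\<^sub>y\<close>, obtained by differentiating (W) in \<open>y\<close>; the cancellation then uses
  \<open>\<sigma>(w) + (1 - \<sigma>(w)) = 1\<close>. The claims about \<open>\<alpha>\<^sub>1, \<alpha>\<^sub>3\<close> follow by symmetry: exchanging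
  \<open>x\<close> with \<open>y\<close> and \<open>u\<close> with \<open>v\<close> preserves (W) and turns \<open>\<beta>\<^sub>1, \<beta>\<^sub>3\<close> into \<open>\<alpha>\<^sub>1, \<alpha>\<^sub>3\<close>.\<close>

lemma has_real_derivative_Dx:
  "(\<lambda>s. f (s, b)) differentiable (at a) \<Longrightarrow> ((\<lambda>s. f (s, b)) has_real_derivative Dx f (a, b)) (at a)"
  by (simp add: Dx_def DERIV_deriv_iff_real_differentiable)

lemma has_real_derivative_Dy:
  "(\<lambda>t. f (a, t)) differentiable (at b) \<Longrightarrow> ((\<lambda>t. f (a, t)) has_real_derivative Dy f (a, b)) (at b)"
  by (simp add: Dy_def DERIV_deriv_iff_real_differentiable)

lemma Dx_comp_swap: "Dx (f \<circ> prod.swap) = Dy f \<circ> prod.swap"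
  by (simp add: Dx_def Dy_def fun_eq_iff)

lemma Dy_comp_swap: "Dy (f \<circ> prod.swap) = Dx f \<circ> prod.swap"
  by (simp add: Dx_def Dy_def fun_eq_iff)

lemma Ck_on_continuous_on: "Ck_on k f U \<Longrightarrow> continuous_on U f"
  by (cases k) simp_all

lemma Ck_on_Dx: "Ck_on (Suc k) f U \<Longrightarrow> Ck_on k (Dx f) U"
  and Ck_on_Dy: "Ck_on (Suc k) f U \<Longrightarrow> Ck_on k (Dy f) U"
  by simp_all

lemma Ck_on_has_derivative_x:
  "Ck_on (Suc k) f U \<Longrightarrow> (a, b) \<in> U \<Longrightarrow> ((\<lambda>s. f (s, b)) has_real_derivative Dx f (a, b)) (at a)"
  by (rule has_real_derivative_Dx) auto

lemma Ck_on_has_derivative_y: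
  "Ck_on (Suc k) f U \<Longrightarrow> (a, b) \<in> U \<Longrightarrow> ((\<lambda>t. f (a, t)) has_real_derivative Dy f (a, b)) (at b)"
  by (rule has_real_derivative_Dy) auto

lemma Ck_on_differentiable:
  assumes "Ck_on (Suc k) f U" "(a, b) \<in> U"
  shows "(\<lambda>s. f (s, b)) differentiable (at a)" "(\<lambda>t. f (a, t)) differentiable (at b)"
  using assms by auto

lemma Ck_on_Suc_imp: "Ck_on (Suc k) f U \<Longrightarrow> Ck_on k f U"
proof (induction k arbitrary: f)
  case (Suc k)
  then show ?case
    using Suc.IH[of "Dx f"] Suc.IH[of "Dy f"]
    unfolding Ck_on.simps(2)[of "Suc k" f] Ck_on.simps(2)[of k f] by blast
qed simp

lemma continuous_on_comp_swap:
  "continuous_on U f \<Longrightarrow> continuous_on (prod.swap ` U) (f \<circ> prod.swap)"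
  by (rule continuous_on_compose[OF continuous_on_swap]) (simp add: image_image)

lemma Ck_on_comp_swap: "Ck_on k f U \<Longrightarrow> Ck_on k (f \<circ> prod.swap) (prod.swap ` U)"
proof (induction k arbitrary: f)
  case 0
  then show ?case by (simp only: Ck_on.simps continuous_on_comp_swap)
next
  case (Suc k)
  then show ?case
    by (simp only: Ck_on.simps Dx_comp_swap Dy_comp_swap continuous_on_comp_swap)
      (auto simp: o_def)
qed

lemma open_image_swap:
  fixes U :: "('a::topological_space \<times> 'b::topological_space) set"
  assumes "open U"
  shows "open (prod.swap ` U)"
proof -
  have "prod.swap ` U = prod.swap -` U"
    by auto
  then show ?thesis
    using assms by (simp add: open_vimage continuous_on_swap)
qed

lemma open_vimage_Pair:
  fixes U :: "('a::topological_space \<times> 'b::topological_space) set"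
  shows "open U \<Longrightarrow> open (Pair x -` U)"
  by (simp add: open_vimage continuous_on_Pair)

lemma second_difference_mean_value:
  fixes f :: "real \<times> real \<Rightarrow> real"
  assumes h: "h > 0"
    and f_x: "\<And>a b. a \<in> {x..x+h} \<Longrightarrow> b \<in> {y..y+h} \<Longrightarrow> (\<lambda>s. f (s, b)) differentiable (at a)"
    and f_xy: "\<And>a b. a \<in> {x..x+h} \<Longrightarrow> b \<in> {y..y+h} \<Longrightarrow> (\<lambda>t. Dx f (a, t)) differentiable (at b)"
  shows "\<exists>\<xi> \<eta>. \<xi> \<in> {x<..<x+h} \<and> \<eta> \<in> {y<..<y+h} \<and>
           f (x+h, y+h) - f (x, y+h) - f (x+h, y) + f (x, y) = h * h * Dy (Dx f) (\<xi>, \<eta>)"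
proof -
  have "((\<lambda>s. f (s, y+h) - f (s, y)) has_real_derivative Dx f (s, y+h) - Dx f (s, y)) (at s)"
    if "x \<le> s" "s \<le> x + h" for s
    using that h by (intro DERIV_diff has_real_derivative_Dx f_x) auto
  from MVT2[of x "x + h", OF _ this] h obtain \<xi> where \<xi>: "x < \<xi>" "\<xi> < x + h"
    and step_x: "(f (x+h, y+h) - f (x+h, y)) - (f (x, y+h) - f (x, y))
           = h * (Dx f (\<xi>, y+h) - Dx f (\<xi>, y))"
    by auto
  have "((\<lambda>t. Dx f (\<xi>, t)) has_real_derivative Dy (Dx f) (\<xi>, t)) (at t)"
    if "y \<le> t" "t \<le> y + h" for t
    using that \<xi> by (intro has_real_derivative_Dy f_xy) auto
  from MVT2[of y "y + h", OF _ this] h obtain \<eta> where \<eta>: "y < \<eta>" "\<eta> < y + h"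
    and step_y: "Dx f (\<xi>, y+h) - Dx f (\<xi>, y) = h * Dy (Dx f) (\<xi>, \<eta>)"
    by auto
  have "f (x+h, y+h) - f (x, y+h) - f (x+h, y) + f (x, y) = h * h * Dy (Dx f) (\<xi>, \<eta>)"
    using step_x unfolding step_y mult.assoc by linarith
  with \<xi> \<eta> show ?thesis by auto
qed

lemma eq_if_isCont_coincide_nearby:
  fixes g k :: "'a::metric_space \<Rightarrow> real"
  assumes g: "isCont g p" and k: "isCont k p"
    and nearby: "\<And>d. d > 0 \<Longrightarrow> \<exists>q r. dist q p < d \<and> dist r p < d \<and> g q = k r"
  shows "g p = k p"
proof (rule ccontr)
  assume "g p \<noteq> k p"
  define e where "e = \<bar>g p - k p\<bar> / 2"
  have "e > 0" using \<open>g p \<noteq> k p\<close> by (simp add: e_def)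
  obtain d1 where "d1 > 0" and d1: "\<And>q. dist q p < d1 \<Longrightarrow> dist (g q) (g p) < e"
    using g \<open>e > 0\<close> unfolding continuous_at_eps_delta by blast
  obtain d2 where "d2 > 0" and d2: "\<And>q. dist q p < d2 \<Longrightarrow> dist (k q) (k p) < e"
    using k \<open>e > 0\<close> unfolding continuous_at_eps_delta by blast
  obtain q r where "dist q p < min d1 d2" "dist r p < min d1 d2" and "g q = k r"
    using nearby[of "min d1 d2"] \<open>d1 > 0\<close> \<open>d2 > 0\<close> by auto
  then have "dist (k r) (g p) < e" "dist (k r) (k p) < e"
    using d1[of q] d2[of r] by auto
  then show False
    unfolding e_def dist_real_def by (auto simp: abs_if split: if_splits)
qed

lemma mixed_partials_coincide_nearby:
  fixes f :: "real \<times> real \<Rightarrow> real"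
  assumes U: "open U" and f: "Ck_on (Suc (Suc k)) f U" and p: "(x, y) \<in> U" and "d > 0"
  shows "\<exists>q r. dist q (x, y) < d \<and> dist r (x, y) < d \<and> Dy (Dx f) q = Dx (Dy f) r"
proof -
  obtain d0 where "d0 > 0" and "ball (x, y) d0 \<subseteq> U"
    using U p openE by blast
  define m where "m = min d d0"
  have "m > 0" "m \<le> d" using \<open>d > 0\<close> \<open>d0 > 0\<close> by (simp_all add: m_def)
  have ball: "ball (x, y) m \<subseteq> U"
    using subset_ball[of m d0 "(x, y)"] \<open>ball (x, y) d0 \<subseteq> U\<close> by (simp add: m_def)
  define h where "h = m / 3"
  have "h > 0" using \<open>m > 0\<close> by (simp add: h_def)
  have close: "dist (a, b) (x, y) < m" if "a \<in> {x..x+h}" "b \<in> {y..y+h}" for a b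
  proof -
    have "dist (a, b) (x, y) \<le> \<bar>a - x\<bar> + \<bar>b - y\<bar>"
      by (simp add: dist_Pair_Pair dist_real_def sqrt_sum_squares_le_sum_abs)
    then show ?thesis using that \<open>h > 0\<close> by (simp add: h_def)
  qed
  have in_U: "(a, b) \<in> U" if "a \<in> {x..x+h}" "b \<in> {y..y+h}" for a b
    using close[OF that] ball by (auto simp: dist_commute)
  have f_diff: "(\<lambda>s. f (s, b)) differentiable (at a)" "(\<lambda>t. f (a, t)) differentiable (at b)"
    "(\<lambda>t. Dx f (a, t)) differentiable (at b)" "(\<lambda>s. Dy f (s, b)) differentiable (at a)"
    if "a \<in> {x..x+h}" "b \<in> {y..y+h}" for a b
    using Ck_on_differentiable[OF f in_U[OF that]] Ck_on_differentiable[OF Ck_on_Dx[OF f] in_U[OF that]]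
      Ck_on_differentiable[OF Ck_on_Dy[OF f] in_U[OF that]] by blast+
  obtain \<xi> \<eta> where \<xi>\<eta>: "\<xi> \<in> {x<..<x+h}" "\<eta> \<in> {y<..<y+h}"
    and diff_xy: "f (x+h, y+h) - f (x, y+h) - f (x+h, y) + f (x, y) = h * h * Dy (Dx f) (\<xi>, \<eta>)"
    using second_difference_mean_value[OF \<open>h > 0\<close> f_diff(1) f_diff(3)] by blast
  \<comment> \<open>The second difference is symmetric in the two variables.\<close>
  have "\<exists>\<eta>' \<xi>'. \<eta>' \<in> {y<..<y+h} \<and> \<xi>' \<in> {x<..<x+h} \<and>
      (f \<circ> prod.swap) (y+h, x+h) - (f \<circ> prod.swap) (y, x+h) - (f \<circ> prod.swap) (y+h, x)
        + (f \<circ> prod.swap) (y, x) = h * h * Dy (Dx (f \<circ> prod.swap)) (\<eta>', \<xi>')"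
    using second_difference_mean_value[OF \<open>h > 0\<close>, of y x "f \<circ> prod.swap"] f_diff(2,4)
    unfolding Dx_comp_swap by simp
  then obtain \<eta>' \<xi>' where \<xi>\<eta>': "\<eta>' \<in> {y<..<y+h}" "\<xi>' \<in> {x<..<x+h}"
    and diff_yx: "f (x+h, y+h) - f (x, y+h) - f (x+h, y) + f (x, y) = h * h * Dx (Dy f) (\<xi>', \<eta>')"
    by (auto simp: Dx_comp_swap Dy_comp_swap)
  have "Dy (Dx f) (\<xi>, \<eta>) = Dx (Dy f) (\<xi>', \<eta>')"
    using diff_xy diff_yx \<open>h > 0\<close> by simp
  moreover have "dist (\<xi>, \<eta>) (x, y) < d"
    using close[of \<xi> \<eta>] \<xi>\<eta> \<open>m \<le> d\<close> by simp
  moreover have "dist (\<xi>', \<eta>') (x, y) < d"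
    using close[of \<xi>' \<eta>'] \<xi>\<eta>' \<open>m \<le> d\<close> by simp
  ultimately show ?thesis
    by blast
qed

theorem Dx_Dy_commute:
  fixes f :: "real \<times> real \<Rightarrow> real"
  assumes U: "open U" and f: "Ck_on (Suc (Suc k)) f U" and p: "p \<in> U"
  shows "Dx (Dy f) p = Dy (Dx f) p"
proof -
  have "continuous_on U (Dy (Dx f))" "continuous_on U (Dx (Dy f))"
    using Ck_on_continuous_on[OF Ck_on_Dy[OF Ck_on_Dx[OF f]]]
      Ck_on_continuous_on[OF Ck_on_Dx[OF Ck_on_Dy[OF f]]] .
  then have "isCont (Dy (Dx f)) p" "isCont (Dx (Dy f)) p"
    using continuous_on_eq_continuous_at[OF U] p by blast+
  moreover obtain x y where "p = (x, y)" by (cases p)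
  ultimately show ?thesis
    using eq_if_isCont_coincide_nearby mixed_partials_coincide_nearby[OF U f] p by metis
qed

definition logistic :: "real \<Rightarrow> real" where
  "logistic z = 1 / (1 + exp (- z))"

lemma logistic_minus: "logistic (- z) = 1 - logistic z"
proof -
  have "1 + exp (- z) > 0" "1 + exp z > 0"
    by (smt (verit) exp_gt_zero)+
  then show ?thesis
    by (simp add: logistic_def divide_simps exp_minus)
qed

lemma logistic_has_real_derivative:
  "(logistic has_real_derivative logistic z * (1 - logistic z)) (at z)"
proof -
  have pos: "1 + exp (- z) > 0" "1 + exp z > 0"
    by (smt (verit) exp_gt_zero)+
  have "(logistic has_real_derivative exp (- z) / (1 + exp (- z))\<^sup>2) (at z)"
    unfolding logistic_def[abs_def]
    by (rule derivative_eq_intros refl)+ (use pos in \<open>simp_all add: power2_eq_square\<close>)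
  moreover have "exp (- z) / (1 + exp (- z))\<^sup>2 = 1 / (1 + exp (- z)) * (exp (- z) / (1 + exp (- z)))"
    by (simp add: power2_eq_square)
  moreover have "exp (- z) / (1 + exp (- z)) = logistic (- z)"
    using pos by (simp add: logistic_def divide_simps exp_minus)
  ultimately have "(logistic has_real_derivative logistic z * logistic (- z)) (at z)"
    by (simp add: logistic_def)
  then show ?thesis
    by (simp only: logistic_minus)
qed

lemma has_real_derivative_logistic_compose:
  assumes "(f has_real_derivative f') (at x within S)"
    and "D = logistic (f x) * (1 - logistic (f x)) * f'"
  shows "((\<lambda>x. logistic (f x)) has_real_derivative D) (at x within S)"
  using DERIV_chain2[OF logistic_has_real_derivative assms(1)] assms(2)
  by (simp add: mult.assoc)

lemma beta1_logistic: "beta1 u v p = Dy u p * Dy v p * logistic ((u p + v p) / 2)"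
  by (simp add: beta1_def logistic_def minus_divide_left)

lemma solves_W_logistic:
  assumes "solves_W u v U" "p \<in> U"
  shows "Dy (Dx u) p = - Dx u p * Dy u p * (1 - logistic ((u p + v p) / 2)) / 2"
    and "Dy (Dx v) p = - Dx v p * Dy v p * (1 - logistic ((u p + v p) / 2)) / 2"
proof -
  have "c / (2 * (1 + exp z)) = c * (1 - logistic z) / 2" for c z
  proof -
    have "c / (2 * (1 + exp z)) = c * logistic (- z) / 2"
      by (simp add: logistic_def)
    then show ?thesis
      by (simp only: logistic_minus)
  qed
  with assms show "Dy (Dx u) p = - Dx u p * Dy u p * (1 - logistic ((u p + v p) / 2)) / 2"
    and "Dy (Dx v) p = - Dx v p * Dy v p * (1 - logistic ((u p + v p) / 2)) / 2"
    unfolding solves_W_def by (metis add_eq_0_iff2 minus_divide_left mult_minus_left)+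
qed

lemma has_real_derivative_beta1_x:
  assumes U: "open U" and u: "Ck_on (Suc (Suc k)) u U" and v: "Ck_on (Suc (Suc l)) v U"
    and W: "solves_W u v U" and p: "(x, y) \<in> U"
  shows "((\<lambda>s. beta1 u v (s, y)) has_real_derivative 0) (at x)"
proof -
  have u_xy: "Dx (Dy u) (x, y) = - Dx u (x, y) * Dy u (x, y) * (1 - logistic ((u (x, y) + v (x, y)) / 2)) / 2"
    using Dx_Dy_commute[OF U u p] solves_W_logistic(1)[OF W p] by simp
  have v_xy: "Dx (Dy v) (x, y) = - Dx v (x, y) * Dy v (x, y) * (1 - logistic ((u (x, y) + v (x, y)) / 2)) / 2"
    using Dx_Dy_commute[OF U v p] solves_W_logistic(2)[OF W p] by simp
  show ?thesis
    unfolding beta1_logistic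
    by (auto intro!: derivative_eq_intros has_real_derivative_logistic_compose
        Ck_on_has_derivative_x[OF u p] Ck_on_has_derivative_x[OF v p]
        Ck_on_has_derivative_x[OF Ck_on_Dy[OF u] p] Ck_on_has_derivative_x[OF Ck_on_Dy[OF v] p]
        simp: u_xy v_xy field_simps)
qed

lemma Dx_Dy_Dy_solves_W:
  assumes U: "open U" and u: "Ck_on (Suc (Suc (Suc k))) u U" and v: "Ck_on (Suc l) v U"
    and W: "solves_W u v U" and p: "(x, y) \<in> U"
  shows "Dx (Dy (Dy u)) (x, y) =
    - (Dy (Dx u) (x, y) * Dy u (x, y) + Dx u (x, y) * Dy (Dy u) (x, y))
        * (1 - logistic ((u (x, y) + v (x, y)) / 2)) / 2
    + Dx u (x, y) * Dy u (x, y) * logistic ((u (x, y) + v (x, y)) / 2)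
        * (1 - logistic ((u (x, y) + v (x, y)) / 2)) * (Dy u (x, y) + Dy v (x, y)) / 4"
    (is "_ = ?D")
proof -
  have "((\<lambda>t. - Dx u (x, t) * Dy u (x, t) * (1 - logistic ((u (x, t) + v (x, t)) / 2)) / 2)
          has_real_derivative ?D) (at y)"
    by (auto intro!: derivative_eq_intros has_real_derivative_logistic_compose
        Ck_on_has_derivative_y[OF u p] Ck_on_has_derivative_y[OF v p]
        Ck_on_has_derivative_y[OF Ck_on_Dx[OF u] p] Ck_on_has_derivative_y[OF Ck_on_Dy[OF u] p]
        simp: field_simps)
  then have "((\<lambda>t. Dx (Dy u) (x, t)) has_real_derivative ?D) (at y)"
  proof (rule has_field_derivative_transform_within_open[OF _ open_vimage_Pair[OF U]])
    show "y \<in> Pair x -` U" using p by simp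
    fix t assume "t \<in> Pair x -` U"
    then show "- Dx u (x, t) * Dy u (x, t) * (1 - logistic ((u (x, t) + v (x, t)) / 2)) / 2 = Dx (Dy u) (x, t)"
      using Dx_Dy_commute[OF U Ck_on_Suc_imp[OF u]] solves_W_logistic(1)[OF W] by simp
  qed
  moreover have "((\<lambda>t. Dx (Dy u) (x, t)) has_real_derivative Dy (Dx (Dy u)) (x, y)) (at y)"
    using Ck_on_has_derivative_y[OF Ck_on_Dx[OF Ck_on_Dy[OF u]] p] .
  ultimately show ?thesis
    using Dx_Dy_commute[OF U Ck_on_Dy[OF u] p] DERIV_unique by metis
qed

lemma has_real_derivative_beta3_x:
  assumes U: "open U" and u: "Ck_on (Suc (Suc (Suc k))) u U" and v: "Ck_on (Suc (Suc l)) v U"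
    and W: "solves_W u v U" and p: "(x, y) \<in> U" and nz: "Dy u (x, y) \<noteq> 0"
  shows "((\<lambda>s. beta3 u v (s, y)) has_real_derivative 0) (at x)"
proof -
  have u_xy: "Dx (Dy u) (x, y) = - Dx u (x, y) * Dy u (x, y) * (1 - logistic ((u (x, y) + v (x, y)) / 2)) / 2"
    using Dx_Dy_commute[OF U Ck_on_Suc_imp[OF u] p] solves_W_logistic(1)[OF W p] by simp
  show ?thesis
    unfolding beta3_def
    by (rule derivative_eq_intros refl has_real_derivative_beta1_x[OF U Ck_on_Suc_imp[OF u] v W p]
        Ck_on_has_derivative_x[OF Ck_on_Dy[OF u] p] Ck_on_has_derivative_x[OF Ck_on_Dy[OF Ck_on_Dy[OF u]] p])+
      (use nz in \<open>simp_all add: Dx_Dy_Dy_solves_W[OF U u Ck_on_Suc_imp[OF v] W p] u_xy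
        solves_W_logistic(1)[OF W p] beta1_logistic field_simps power2_eq_square\<close>)
qed

lemma solves_W_comp_swap:
  assumes U: "open U" and u: "Ck_on (Suc (Suc k)) u U" and v: "Ck_on (Suc (Suc l)) v U"
    and W: "solves_W u v U"
  shows "solves_W (v \<circ> prod.swap) (u \<circ> prod.swap) (prod.swap ` U)"
  unfolding solves_W_def
proof
  fix q assume "q \<in> prod.swap ` U"
  then obtain p where p: "p \<in> U" and q: "q = prod.swap p" by blast
  show "Dy (Dx (v \<circ> prod.swap)) q + Dx (v \<circ> prod.swap) q * Dy (v \<circ> prod.swap) q /
          (2 * (1 + exp (((v \<circ> prod.swap) q + (u \<circ> prod.swap) q) / 2))) = 0 \<and>
        Dy (Dx (u \<circ> prod.swap)) q + Dx (u \<circ> prod.swap) q * Dy (u \<circ> prod.swap) q /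
          (2 * (1 + exp (((v \<circ> prod.swap) q + (u \<circ> prod.swap) q) / 2))) = 0"
    using W p Dx_Dy_commute[OF U u p] Dx_Dy_commute[OF U v p]
    unfolding solves_W_def q by (simp add: Dx_comp_swap Dy_comp_swap ac_simps)
qed

lemma beta1_comp_swap: "beta1 (v \<circ> prod.swap) (u \<circ> prod.swap) = alpha1 u v \<circ> prod.swap"
  by (simp add: fun_eq_iff beta1_def alpha1_def Dy_comp_swap ac_simps)

lemma beta3_comp_swap: "beta3 (v \<circ> prod.swap) (u \<circ> prod.swap) = alpha3 u v \<circ> prod.swap"
  by (simp add: fun_eq_iff beta3_def alpha3_def Dy_comp_swap beta1_comp_swap)

lemma has_real_derivative_alpha1_y:
  assumes U: "open U" and u: "Ck_on (Suc (Suc k)) u U" and v: "Ck_on (Suc (Suc l)) v U"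
    and W: "solves_W u v U" and p: "(x, y) \<in> U"
  shows "((\<lambda>t. alpha1 u v (x, t)) has_real_derivative 0) (at y)"
  using has_real_derivative_beta1_x[OF open_image_swap[OF U] Ck_on_comp_swap[OF v] Ck_on_comp_swap[OF u]
      solves_W_comp_swap[OF U u v W], of y x] p
  by (simp add: beta1_comp_swap)

lemma has_real_derivative_alpha3_y:
  assumes U: "open U" and u: "Ck_on (Suc (Suc k)) u U" and v: "Ck_on (Suc (Suc (Suc l))) v U"
    and W: "solves_W u v U" and p: "(x, y) \<in> U" and nz: "Dx v (x, y) \<noteq> 0"
  shows "((\<lambda>t. alpha3 u v (x, t)) has_real_derivative 0) (at y)"
  using has_real_derivative_beta3_x[OF open_image_swap[OF U] Ck_on_comp_swap[OF v] Ck_on_comp_swap[OF u]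
      solves_W_comp_swap[OF U u Ck_on_Suc_imp[OF v] W], of y x] p nz
  by (simp add: beta3_comp_swap Dy_comp_swap)

theorem mainTheorem3:
  fixes u v :: "real \<times> real \<Rightarrow> real" and U :: "(real \<times> real) set"
  assumes "open U"
    and "Ck_on 3 u U" and "Ck_on 3 v U"
    and "solves_W u v U"
  shows "((\<forall>p \<in> U. Dy u p \<noteq> 0) \<longrightarrow>
           (\<forall>(x, y) \<in> U. ((\<lambda>s. beta1 u v (s, y)) has_real_derivative 0) (at x) \<and>
                         ((\<lambda>s. beta3 u v (s, y)) has_real_derivative 0) (at x)))
       \<and> ((\<forall>p \<in> U. Dx v p \<noteq> 0) \<longrightarrow>
           (\<forall>(x, y) \<in> U. ((\<lambda>t. alpha1 u v (x, t)) has_real_derivative 0) (at y) \<and>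
                         ((\<lambda>t. alpha3 u v (x, t)) has_real_derivative 0) (at y)))"
proof -
  note U = assms(1) and W = assms(4)
  have u: "Ck_on (Suc (Suc (Suc 0))) u U" and v: "Ck_on (Suc (Suc (Suc 0))) v U"
    using assms(2,3) by (simp_all only: numeral_3_eq_3)
  have beta: "((\<lambda>s. beta1 u v (s, y)) has_real_derivative 0) (at x) \<and>
              ((\<lambda>s. beta3 u v (s, y)) has_real_derivative 0) (at x)"
    if "(x, y) \<in> U" "Dy u (x, y) \<noteq> 0" for x y
    using has_real_derivative_beta1_x[OF U u v W that(1)] has_real_derivative_beta3_x[OF U u v W that]
    by blast
  have alpha: "((\<lambda>t. alpha1 u v (x, t)) has_real_derivative 0) (at y) \<and>
               ((\<lambda>t. alpha3 u v (x, t)) has_real_derivative 0) (at y)"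
    if "(x, y) \<in> U" "Dx v (x, y) \<noteq> 0" for x y
    using has_real_derivative_alpha1_y[OF U u v W that(1)] has_real_derivative_alpha3_y[OF U u v W that]
    by blast
  show ?thesis
    using beta alpha by auto
qed

end
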